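(* Let $\mathcal N$ be a network with a binary collision profile and character $D^*$. For every integer $T\ge\max(D^*,1)$, $\mathcal R^{(\mathcal M_T,\mathcal E_T)}\subseteq\mathcal R^{\mathcal N}$ (and hence, together with $\mathcal R^{\mathcal N}\subseteq\mathcal R^{(\mathcal M_T,\mathcal E_T)}$, equality holds).
   Context: A network is a triple $\mathcal N=(\mathcal L,\mathcal I,D_{\mathcal L})$ where $\mathcal L$ is a finite nonempty set of links, each $\mathcal I(l)$ is a collection of nonempty subsets of $\mathcal L$, and $D_{\mathcal L}$ assigns an integer $D_{\mathcal L}(l,l')$ to every pair with $l'\in\phi$ for some $\phi\in\mathcal I(l)$. The profile is binary if every $\phi\in\mathcal I(l)$ is a singleton. The character is $D^*=\max_{l}\max_{\phi\in\mathcal I(l)}\max_{l'\in\phi}|D_{\mathcal L}(l,l')|$ (0 if there are no collision sets). A schedule is a map $S:\mathcal L\times\mathbb Z\to\{0,1\}$; $S(l,t)$ has a collision if there is $\phi\in\mathcal I(l)$ with $S(l',t+D_{\mathcal L}(l,l'))=1$ for all $l'\in\phi$; $S$ is collision free if no $(l,t)$ with $S(l,t)=1$ has a collision. $R_S(l)=\lim_{T\to\infty}\frac1T\sum_{t=0}^{T-1}\iota\big(S(l,t)=1\text{ and collision free}\big)$ when it exists; $R_S=(R_S(l))_l$. A nonnegative vector $R\in[0,\infty)^{\mathcal L}$ is achievable if for every $\epsilon>0$ some schedule $S$ has a rate vector with $R_S(l)\ge R(l)-\epsilon$ for all $l$; $\mathcal R^{\mathcal N}$ is the set of achievable nonnegative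 vectors. $S[T,k]$ is the $|\mathcal L|\times T$ binary matrix with $S[T,k](l,j)=S(l,kT+j)$. The scheduling graph $(\mathcal M_T,\mathcal E_T)$ has vertex set $\mathcal M_T$ = all $|\mathcal L|\times T$ binary matrices $A$ with $A=S[T,0]$ for some collision-free schedule $S$, and edge set $\mathcal E_T$ = all pairs $(A,B)$ with $A=S[T,0]$, $B=S[T,1]$ for some collision-free $S$. A cycle is a sequence $(A_0,\dots,A_k)$, $k\ge1$, with $(A_i,A_{i+1})\in\mathcal E_T$, $A_k=A_0$, and $A_0,\dots,A_{k-1}$ pairwise distinct; its rate vector is $R_C=\frac{1}{kT}\sum_{i=0}^{k-1}A_i\mathbf 1$. $\mathcal R^{(\mathcal M_T,\mathcal E_T)}$ is the convex hull of the rate vectors of all cycles. *)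

theory Defs
  imports "HOL-Analysis.Analysis"
begin

text \<open>A network over a finite (nonempty) type of links 'l is given by the
collision profile I :: 'l => 'l set set and the delays D :: 'l => 'l => int
(only the values D l l' with l' in some phi in I l are relevant).
Schedules are maps 'l => int => bool (True = 1).\<close>

definition wf_network :: "('l \<Rightarrow> 'l set set) \<Rightarrow> bool" where
  "wf_network I \<longleftrightarrow> (\<forall>l. \<forall>\<phi>\<in>I l. \<phi> \<noteq> {})"

definition binary_profile :: "('l \<Rightarrow> 'l set set) \<Rightarrow> bool" where
  "binary_profile I \<longleftrightarrow> (\<forall>l. \<forall>\<phi>\<in>I l. \<exists>l'. \<phi> = {l'})"

definition character :: "('l::finite \<Rightarrow> 'l set set) \<Rightarrow> ('l \<Rightarrow> 'l \<Rightarrow> int) \<Rightarrow> nat" where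
  "character I D = Max (insert 0 {nat \<bar>D l l'\<bar> | l \<phi> l'. \<phi> \<in> I l \<and> l' \<in> \<phi>})"

definition has_collision ::
  "('l \<Rightarrow> 'l set set) \<Rightarrow> ('l \<Rightarrow> 'l \<Rightarrow> int) \<Rightarrow> ('l \<Rightarrow> int \<Rightarrow> bool) \<Rightarrow> 'l \<Rightarrow> int \<Rightarrow> bool" where
  "has_collision I D S l t \<longleftrightarrow> (\<exists>\<phi>\<in>I l. \<forall>l'\<in>\<phi>. S l' (t + D l l'))"

definition collision_free ::
  "('l \<Rightarrow> 'l set set) \<Rightarrow> ('l \<Rightarrow> 'l \<Rightarrow> int) \<Rightarrow> ('l \<Rightarrow> int \<Rightarrow> bool) \<Rightarrow> bool" where
  "collision_free I D S \<longleftrightarrow> (\<forall>l t. S l t \<longrightarrow> \<not> has_collision I D S l t)"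

definition avg_success ::
  "('l \<Rightarrow> 'l set set) \<Rightarrow> ('l \<Rightarrow> 'l \<Rightarrow> int) \<Rightarrow> ('l \<Rightarrow> int \<Rightarrow> bool) \<Rightarrow> 'l \<Rightarrow> nat \<Rightarrow> real" where
  "avg_success I D S l T =
     (1 / real T) * (\<Sum>t<T. if S l (int t) \<and> \<not> has_collision I D S l (int t) then 1 else 0)"

definition is_rate_vector ::
  "('l::finite \<Rightarrow> 'l set set) \<Rightarrow> ('l \<Rightarrow> 'l \<Rightarrow> int) \<Rightarrow> ('l \<Rightarrow> int \<Rightarrow> bool) \<Rightarrow> real^'l \<Rightarrow> bool" where
  "is_rate_vector I D S R \<longleftrightarrow> (\<forall>l. avg_success I D S l \<longlonglongrightarrow> R $ l)"

definition achievable_region ::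
  "('l::finite \<Rightarrow> 'l set set) \<Rightarrow> ('l \<Rightarrow> 'l \<Rightarrow> int) \<Rightarrow> (real^'l) set" where
  "achievable_region I D =
     {R. (\<forall>l. 0 \<le> R $ l) \<and>
         (\<forall>\<epsilon>>0. \<exists>S RS. is_rate_vector I D S RS \<and> (\<forall>l. RS $ l \<ge> R $ l - \<epsilon>))}"

text \<open>The |L| x T binary matrix S[T,k]; a matrix is a map 'l => nat => bool whose
entries at columns j >= T are False (so it is determined by its |L| x T block).\<close>
definition block :: "('l \<Rightarrow> int \<Rightarrow> bool) \<Rightarrow> nat \<Rightarrow> int \<Rightarrow> 'l \<Rightarrow> nat \<Rightarrow> bool" where
  "block S T k = (\<lambda>l j. j < T \<and> S l (k * int T + int j))"

definition sched_vertices ::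
  "('l \<Rightarrow> 'l set set) \<Rightarrow> ('l \<Rightarrow> 'l \<Rightarrow> int) \<Rightarrow> nat \<Rightarrow> ('l \<Rightarrow> nat \<Rightarrow> bool) set" where
  "sched_vertices I D T = {block S T 0 | S. collision_free I D S}"

definition sched_edges ::
  "('l \<Rightarrow> 'l set set) \<Rightarrow> ('l \<Rightarrow> 'l \<Rightarrow> int) \<Rightarrow> nat \<Rightarrow> (('l \<Rightarrow> nat \<Rightarrow> bool) \<times> ('l \<Rightarrow> nat \<Rightarrow> bool)) set" where
  "sched_edges I D T = {(block S T 0, block S T 1) | S. collision_free I D S}"

text \<open>A cycle (A_0,...,A_k), k >= 1, given as the list [A_0,...,A_k].\<close>
definition is_cycle ::
  "('l \<Rightarrow> 'l set set) \<Rightarrow> ('l \<Rightarrow> 'l \<Rightarrow> int) \<Rightarrow> nat \<Rightarrow> ('l \<Rightarrow> nat \<Rightarrow> bool) list \<Rightarrow> bool" where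
  "is_cycle I D T As \<longleftrightarrow>
     length As \<ge> 2 \<and>
     (\<forall>i. i + 1 < length As \<longrightarrow> (As ! i, As ! (i + 1)) \<in> sched_edges I D T) \<and>
     last As = hd As \<and> distinct (butlast As)"

definition cycle_rate :: "nat \<Rightarrow> ('l::finite \<Rightarrow> nat \<Rightarrow> bool) list \<Rightarrow> real^'l" where
  "cycle_rate T As =
     (let k = length As - 1 in
      \<chi> l. (1 / (real k * real T)) * (\<Sum>i<k. real (card {j. j < T \<and> (As ! i) l j})))"

definition graph_region ::
  "('l::finite \<Rightarrow> 'l set set) \<Rightarrow> ('l \<Rightarrow> 'l \<Rightarrow> int) \<Rightarrow> nat \<Rightarrow> (real^'l) set" where
  "graph_region I D T = convex hull {cycle_rate T As | As. is_cycle I D T As}"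

end

theory Submission
  imports Defs
begin

text \<open>Laying the blocks of a closed walk of the scheduling graph end to end, periodically, gives a
schedule whose rates are the average row sums of the walk. It is collision free: in a binary profile
a collision pairs a slot \<open>t\<close> with a single slot \<open>t + d\<close>, where \<open>\<bar>d\<bar> \<le> D\<^sup>* \<le> T\<close>, so both
slots lie in two consecutive blocks of the walk, and these are the first two blocks of some
collision-free schedule. Hence rates of closed walks, in particular of cycles, are achievable. The
set of vectors approximated from below by rates of closed walks is convex: the all-zero block may
follow and precede any block, so closed walks can be glued together through it, and repeating two
walks in proportion \<open>u : v\<close> approximates \<open>u R\<^sub>1 + v R\<^sub>2\<close> up to an error that vanishes with
the number of repetitions. So this set contains the convex hull of the cycle rates.\<close>

section \<open>Schedules assembled from blocks\<close>

definition zero_block :: "'l \<Rightarrow> nat \<Rightarrow> bool" where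
  "zero_block = (\<lambda>l j. False)"

lemma collision_free_mono:
  assumes "collision_free I D S" and "\<And>l t. S' l t \<Longrightarrow> S l t"
  shows "collision_free I D S'"
  using assms unfolding collision_free_def has_collision_def by blast

lemma sched_edgeI: "collision_free I D S \<Longrightarrow> (block S T 0, block S T 1) \<in> sched_edges I D T"
  unfolding sched_edges_def by blast

lemma sched_edge_to_zero:
  assumes "(A, B) \<in> sched_edges I D T"
  shows "(A, zero_block) \<in> sched_edges I D T"
proof -
  obtain S where S: "collision_free I D S" "A = block S T 0"
    using assms unfolding sched_edges_def by auto
  let ?S = "\<lambda>l t. t < int T \<and> S l t"
  have "collision_free I D ?S" using S(1) by (rule collision_free_mono) simp
  moreover have "block ?S T 0 = A" "block ?S T 1 = zero_block"
    using S(2) by (auto simp: block_def zero_block_def fun_eq_iff)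
  ultimately show ?thesis using sched_edgeI by metis
qed

lemma sched_edge_from_zero:
  assumes "(A, B) \<in> sched_edges I D T"
  shows "(zero_block, B) \<in> sched_edges I D T"
proof -
  obtain S where S: "collision_free I D S" "B = block S T 1"
    using assms unfolding sched_edges_def by auto
  let ?S = "\<lambda>l t. int T \<le> t \<and> S l t"
  have "collision_free I D ?S" using S(1) by (rule collision_free_mono) simp
  moreover have "block ?S T 0 = zero_block" "block ?S T 1 = B"
    using S(2) by (auto simp: block_def zero_block_def fun_eq_iff)
  ultimately show ?thesis using sched_edgeI by metis
qed

lemma sched_edge_zero_zero: "(zero_block, zero_block) \<in> sched_edges I D T"
proof -
  have "collision_free I D (\<lambda>l t. False)" by (simp add: collision_free_def)
  moreover have "block (\<lambda>l t. False) T k = zero_block" for k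
    by (simp add: block_def zero_block_def fun_eq_iff)
  ultimately show ?thesis using sched_edgeI by metis
qed

lemma character_ge:
  fixes I :: "'l::finite \<Rightarrow> 'l set set"
  assumes "\<phi> \<in> I l" and "l' \<in> \<phi>"
  shows "nat \<bar>D l l'\<bar> \<le> character I D"
proof -
  have "finite {nat \<bar>D l l'\<bar> | l \<phi> l'. \<phi> \<in> I l \<and> l' \<in> \<phi>}"
    by (rule finite_subset[of _ "(\<lambda>(l, l'). nat \<bar>D l l'\<bar>) ` UNIV"]) auto
  with assms show ?thesis unfolding character_def
    by (intro Max_ge) auto
qed

definition block_schedule :: "nat \<Rightarrow> (int \<Rightarrow> 'l \<Rightarrow> nat \<Rightarrow> bool) \<Rightarrow> 'l \<Rightarrow> int \<Rightarrow> bool" where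
  "block_schedule T W l t = W (t div int T) l (nat (t mod int T))"

lemma block_schedule_at:
  fixes s :: int
  assumes "0 \<le> s" and "s < int T"
  shows "block_schedule T W l (m * int T + s) = W m l (nat s)"
  using assms by (simp add: block_schedule_def add.commute)

lemma block_schedule_window:
  assumes "(W m, W (m + 1)) \<in> sched_edges I D T"
  obtains S where "collision_free I D S"
    and "\<And>l s. 0 \<le> s \<Longrightarrow> s < 2 * int T \<Longrightarrow> S l s = block_schedule T W l (m * int T + s)"
proof -
  obtain S where S: "collision_free I D S" "W m = block S T 0" "W (m + 1) = block S T 1"
    using assms unfolding sched_edges_def by auto
  have "S l s = block_schedule T W l (m * int T + s)" if "0 \<le> s" "s < 2 * int T" for l s
  proof (cases "s < int T")
    case True
    then show ?thesis using that by (simp add: block_schedule_at S(2) block_def nat_less_iff)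
  next
    case False
    have shift: "m * int T + s = (m + 1) * int T + (s - int T)" by (simp add: algebra_simps)
    have "block_schedule T W l (m * int T + s) = W (m + 1) l (nat (s - int T))"
      unfolding shift by (rule block_schedule_at) (use that False in auto)
    then show ?thesis using that False by (simp add: S(3) block_def nat_less_iff)
  qed
  with S(1) that show thesis by blast
qed

lemma collision_free_block_schedule:
  fixes I :: "'l::finite \<Rightarrow> 'l set set"
  assumes bin: "binary_profile I" and TD: "character I D \<le> T" and T1: "1 \<le> T"
    and edges: "\<And>m. (W m, W (m + 1)) \<in> sched_edges I D T"
  shows "collision_free I D (block_schedule T W)"
  unfolding collision_free_def
proof (intro allI impI notI)
  fix l t
  let ?S = "block_schedule T W"
  assume active: "?S l t" and "has_collision I D ?S l t"
  then obtain \<phi> where \<phi>: "\<phi> \<in> I l" "\<forall>l'\<in>\<phi>. ?S l' (t + D l l')"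
    unfolding has_collision_def by blast
  with bin obtain l' where l': "\<phi> = {l'}" unfolding binary_profile_def by blast
  define d where "d = D l l'"
  have partner: "?S l' (t + d)" using \<phi> l' d_def by auto
  have d: "\<bar>d\<bar> \<le> int T" using character_ge[of \<phi> I l l' D] \<phi>(1) l' TD d_def by auto
  \<comment> \<open>Both slots lie in the window of two blocks starting at the block of the earlier one.\<close>
  define a where "a = min t (t + d)"
  define m where "m = a div int T"
  have "0 \<le> a mod int T" "a mod int T < int T" using T1 by simp_all
  then have window: "m * int T \<le> a" "a < m * int T + int T"
    using div_mult_mod_eq[of a "int T"] unfolding m_def by linarith+
  obtain S where S: "collision_free I D S"
    "\<And>l s. 0 \<le> s \<Longrightarrow> s < 2 * int T \<Longrightarrow> S l s = ?S l (m * int T + s)"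
    using block_schedule_window[of W m, OF edges] by blast
  have "S l (t - m * int T)" "S l' (t - m * int T + d)"
    using S(2)[of "t - m * int T" l] S(2)[of "t - m * int T + d" l'] active partner window d
    unfolding a_def by (auto simp: algebra_simps)
  moreover from this(2) have "has_collision I D S l (t - m * int T)"
    unfolding has_collision_def using \<phi>(1) l' d_def by auto
  ultimately show False using S(1) unfolding collision_free_def by blast
qed

section \<open>Cesaro means of periodic sequences\<close>

lemma sum_periodic:
  fixes f :: "nat \<Rightarrow> real"
  assumes per: "\<And>t. f (t + P) = f t"
  shows "(\<Sum>t<q * P + r. f t) = real q * (\<Sum>t<P. f t) + (\<Sum>t<r. f t)"
proof -
  have shift: "(\<Sum>t<n + r. f t) = (\<Sum>t<n. f t) + (\<Sum>t<r. f (n + t))" for n r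
    by (induction r) simp_all
  have f_shift: "f (q * P + t) = f t" for q t
  proof (induction q)
    case (Suc q)
    have "Suc q * P + t = (q * P + t) + P" by simp
    then show ?case using Suc per by metis
  qed simp
  have "(\<Sum>t<q * P. f t) = real q * (\<Sum>t<P. f t)"
  proof (induction q)
    case (Suc q)
    have "(\<Sum>t<Suc q * P. f t) = (\<Sum>t<q * P + P. f t)" by (simp add: add.commute)
    also have "\<dots> = (\<Sum>t<q * P. f t) + (\<Sum>t<P. f t)" using shift[of "q * P" P] f_shift by simp
    finally show ?case using Suc by (simp add: algebra_simps)
  qed simp
  then show ?thesis using shift[of "q * P" r] f_shift by simp
qed

lemma periodic_cesaro_limit:
  fixes f :: "nat \<Rightarrow> real"
  assumes per: "\<And>t. f (t + P) = f t" and P: "0 < P"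
  shows "(\<lambda>N. (\<Sum>t<N. f t) / real N) \<longlonglongrightarrow> (\<Sum>t<P. f t) / real P"
proof -
  define c where "c = (\<Sum>t<P. f t)"
  define B where "B = (\<Sum>t<P. \<bar>f t\<bar>)"
  have bound: "\<bar>(\<Sum>t<N. f t) / real N - c / real P\<bar> \<le> 2 * B / real N" if N: "0 < N" for N
  proof -
    define q where "q = N div P"
    define r where "r = N mod P"
    have N_eq: "N = q * P + r" by (simp add: q_def r_def)
    have "r < P" using P by (simp add: r_def)
    have "\<bar>\<Sum>t<r. f t\<bar> \<le> (\<Sum>t<r. \<bar>f t\<bar>)" by (rule sum_abs)
    also have "\<dots> \<le> B" unfolding B_def by (rule sum_mono2) (use \<open>r < P\<close> in auto)
    finally have rest: "\<bar>\<Sum>t<r. f t\<bar> \<le> B" .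
    have "real r * \<bar>c\<bar> \<le> real P * \<bar>c\<bar>" using \<open>r < P\<close> by (intro mult_right_mono) auto
    then have "\<bar>real r * c / real P\<bar> \<le> \<bar>c\<bar>" using P by (simp add: abs_mult divide_le_eq mult.commute)
    also have "\<bar>c\<bar> \<le> B" unfolding c_def B_def by (rule sum_abs)
    finally have "\<bar>(\<Sum>t<r. f t) - real r * c / real P\<bar> \<le> 2 * B"
      using rest abs_triangle_ineq4[of "\<Sum>t<r. f t" "real r * c / real P"] by (smt (verit))
    moreover have "(\<Sum>t<N. f t) / real N - c / real P = ((\<Sum>t<r. f t) - real r * c / real P) / real N"
    proof -
      have "(\<Sum>t<N. f t) = real q * c + (\<Sum>t<r. f t)"
        unfolding N_eq c_def by (rule sum_periodic[of f P, OF per])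
      moreover have "real N = real q * real P + real r" using N_eq by simp
      ultimately show ?thesis using P N by (simp add: field_simps)
    qed
    ultimately show ?thesis using N by (simp add: abs_div divide_right_mono)
  qed
  have "(\<lambda>N. (\<Sum>t<N. f t) / real N - c / real P) \<longlonglongrightarrow> 0"
  proof (rule Lim_null_comparison)
    show "\<forall>\<^sub>F N in sequentially. norm ((\<Sum>t<N. f t) / real N - c / real P) \<le> 2 * B / real N"
      using bound by (auto intro: eventually_sequentiallyI[of 1])
  qed (rule lim_const_over_n)
  then show ?thesis unfolding c_def by (rule LIM_zero_cancel)
qed

section \<open>Closed walks of the scheduling graph\<close>

definition row_sum :: "nat \<Rightarrow> ('l \<Rightarrow> nat \<Rightarrow> bool) \<Rightarrow> 'l \<Rightarrow> real" where
  "row_sum T A l = real (card {j. j < T \<and> A l j})"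

lemma row_sum_eq_sum: "row_sum T A l = (\<Sum>j<T. if A l j then 1 else 0)"
proof -
  have "{j. j < T \<and> A l j} = {..<T} \<inter> Collect (A l)" by auto
  then show ?thesis by (simp add: row_sum_def sum.If_cases)
qed

definition cyclic_blocks :: "'a list \<Rightarrow> int \<Rightarrow> 'a" where
  "cyclic_blocks w m = w ! nat (m mod int (length w))"

lemma block_schedule_cyclic_period:
  "block_schedule T (cyclic_blocks w) l (int (t + length w * T)) = block_schedule T (cyclic_blocks w) l (int t)"
proof (cases "T = 0")
  case False
  then have "int (t + length w * T) div int T = int t div int T + int (length w)"
    by (simp add: add.commute)
  then show ?thesis by (simp add: block_schedule_def cyclic_blocks_def)
qed simp

lemma sum_block_schedule_cyclic:
  "(\<Sum>t<length w * T. if block_schedule T (cyclic_blocks w) l (int t) then 1 else 0) = (\<Sum>A\<leftarrow>w. row_sum T A l)"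
  (is "(\<Sum>t<_. ?f t) = _")
proof -
  have "(\<Sum>t<length w * T. ?f t) = (\<Sum>i<length w. \<Sum>t\<in>{i * T..<i * T + T}. ?f t)"
    by (rule sum.nat_group[symmetric])
  also have "\<dots> = (\<Sum>i<length w. row_sum T (w ! i) l)"
  proof (rule sum.cong[OF refl])
    fix i assume i: "i \<in> {..<length w}"
    have "(\<Sum>t\<in>{i * T..<i * T + T}. ?f t) = (\<Sum>j<T. ?f (j + i * T))"
      using sum.shift_bounds_nat_ivl[of ?f 0 "i * T" T] by (simp add: add.commute atLeast0LessThan)
    also have "\<dots> = (\<Sum>j<T. if (w ! i) l j then 1 else 0)"
    proof (rule sum.cong[OF refl])
      fix j assume "j \<in> {..<T}"
      then have "block_schedule T (cyclic_blocks w) l (int i * int T + int j) = cyclic_blocks w (int i) l j"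
        by (simp add: block_schedule_at)
      then show "?f (j + i * T) = (if (w ! i) l j then 1 else 0)"
        using i by (simp add: cyclic_blocks_def add.commute)
    qed
    finally show "(\<Sum>t\<in>{i * T..<i * T + T}. ?f t) = row_sum T (w ! i) l" by (simp add: row_sum_eq_sum)
  qed
  also have "\<dots> = (\<Sum>A\<leftarrow>w. row_sum T A l)"
    by (simp add: sum_list_sum_nth atLeast0LessThan)
  finally show ?thesis .
qed

abbreviation sched_walk :: "('l \<Rightarrow> 'l set set) \<Rightarrow> ('l \<Rightarrow> 'l \<Rightarrow> int) \<Rightarrow> nat \<Rightarrow> ('l \<Rightarrow> nat \<Rightarrow> bool) list \<Rightarrow> bool" where
  "sched_walk I D T \<equiv> successively (\<lambda>A B. (A, B) \<in> sched_edges I D T)"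

definition closed_walk :: "('l \<Rightarrow> 'l set set) \<Rightarrow> ('l \<Rightarrow> 'l \<Rightarrow> int) \<Rightarrow> nat \<Rightarrow> ('l \<Rightarrow> nat \<Rightarrow> bool) list \<Rightarrow> bool" where
  "closed_walk I D T w \<longleftrightarrow> w \<noteq> [] \<and> sched_walk I D T (w @ [hd w])"

definition walk_rate :: "nat \<Rightarrow> ('l \<Rightarrow> nat \<Rightarrow> bool) list \<Rightarrow> 'l \<Rightarrow> real" where
  "walk_rate T w l = (\<Sum>A\<leftarrow>w. row_sum T A l) / (real (length w) * real T)"

lemma closed_walk_cyclic_blocks_edge:
  assumes "closed_walk I D T w"
  shows "(cyclic_blocks w m, cyclic_blocks w (m + 1)) \<in> sched_edges I D T"
proof -
  let ?n = "length w"
  have n: "0 < ?n" using assms by (simp add: closed_walk_def)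
  define i where "i = nat (m mod int ?n)"
  have i: "i < ?n" "int i = m mod int ?n" using n by (simp_all add: i_def nat_less_iff)
  have "(m + 1) mod int ?n = int (Suc i mod ?n)"
    by (metis i(2) mod_add_left_eq of_nat_Suc zmod_int add.commute)
  then have next_block: "cyclic_blocks w (m + 1) = w ! (Suc i mod ?n)"
    by (simp add: cyclic_blocks_def)
  have "((w @ [hd w]) ! i, (w @ [hd w]) ! Suc i) \<in> sched_edges I D T"
    using assms i(1) unfolding closed_walk_def successively_conv_nth by auto
  moreover have "Suc i mod ?n = (if Suc i < ?n then Suc i else 0)"
    using i(1) by (auto simp: mod_Suc)
  ultimately show ?thesis
    using i n next_block by (auto simp: cyclic_blocks_def i_def nth_append hd_conv_nth split: if_splits)
qed

lemma closed_walk_rate_vector: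
  fixes I :: "'l::finite \<Rightarrow> 'l set set"
  assumes bin: "binary_profile I" and TD: "character I D \<le> T" and T1: "1 \<le> T"
    and w: "closed_walk I D T w"
  shows "is_rate_vector I D (block_schedule T (cyclic_blocks w)) (\<chi> l. walk_rate T w l)"
  unfolding is_rate_vector_def
proof
  fix l
  let ?S = "block_schedule T (cyclic_blocks w)"
  let ?P = "length w * T"
  define f where "f = (\<lambda>t::nat. if ?S l (int t) then 1 else (0::real))"
  have "collision_free I D ?S"
    using collision_free_block_schedule[of I D T "cyclic_blocks w", OF bin TD T1 closed_walk_cyclic_blocks_edge[OF w]] .
  then have "(if ?S l (int t) \<and> \<not> has_collision I D ?S l (int t) then 1 else 0) = f t" for t
    by (simp add: f_def collision_free_def)
  then have "(\<Sum>t<N. if ?S l (int t) \<and> \<not> has_collision I D ?S l (int t) then 1 else 0) = (\<Sum>t<N. f t)" for N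
    by (rule sum.cong[OF refl])
  then have "avg_success I D ?S l = (\<lambda>N. (\<Sum>t<N. f t) / real N)"
    unfolding avg_success_def by simp
  moreover have "(\<lambda>N. (\<Sum>t<N. f t) / real N) \<longlonglongrightarrow> (\<Sum>t<?P. f t) / real ?P"
  proof (rule periodic_cesaro_limit)
    show "f (t + ?P) = f t" for t by (simp only: f_def block_schedule_cyclic_period)
    show "0 < ?P" using w T1 by (simp add: closed_walk_def)
  qed
  moreover have "(\<Sum>t<?P. f t) / real ?P = walk_rate T w l"
    unfolding f_def sum_block_schedule_cyclic by (simp add: walk_rate_def)
  ultimately show "avg_success I D ?S l \<longlonglongrightarrow> (\<chi> l. walk_rate T w l) $ l" by simp
qed

lemma closed_walk_last_hd: "closed_walk I D T w \<Longrightarrow> (last w, hd w) \<in> sched_edges I D T"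
  unfolding closed_walk_def by (auto simp: successively_append_iff)

lemma closed_walk_concat_replicate:
  assumes u: "closed_walk I D T u" and "0 < a"
  shows "closed_walk I D T (concat (replicate a u))"
  using \<open>0 < a\<close>
proof (induction a)
  case (Suc a)
  show ?case
  proof (cases a)
    case (Suc b)
    let ?x = "concat (replicate a u)"
    have u_ne: "u \<noteq> []" using u by (simp add: closed_walk_def)
    have "closed_walk I D T ?x" using Suc.IH Suc by simp
    moreover have "hd ?x = hd u" using Suc u_ne by simp
    ultimately have "sched_walk I D T (u @ ?x @ [hd u])"
      using u closed_walk_last_hd[OF u] unfolding closed_walk_def
      by (auto simp: successively_append_iff)
    then show ?thesis using u_ne by (simp add: closed_walk_def)
  qed (use u in simp)
qed simp

lemma closed_walk_Cons_zero:
  assumes w: "closed_walk I D T w"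
  shows "closed_walk I D T (zero_block # w)"
proof -
  have edge: "(last w, hd w) \<in> sched_edges I D T" by (rule closed_walk_last_hd[OF w])
  have "sched_walk I D T (zero_block # w @ [zero_block])"
    using w sched_edge_from_zero[OF edge] sched_edge_to_zero[OF edge]
    unfolding closed_walk_def by (auto simp: successively_append_iff successively_Cons)
  then show ?thesis by (simp add: closed_walk_def)
qed

lemma closed_walk_zero_concat_replicate:
  assumes "closed_walk I D T u"
  shows "closed_walk I D T (zero_block # concat (replicate a u))"
proof (cases "a = 0")
  case True
  then show ?thesis by (simp add: closed_walk_def sched_edge_zero_zero)
qed (use assms in \<open>simp add: closed_walk_Cons_zero closed_walk_concat_replicate\<close>)

lemma closed_walk_zero_append:
  assumes "closed_walk I D T (zero_block # x)" and "closed_walk I D T (zero_block # y)"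
  shows "closed_walk I D T (zero_block # x @ zero_block # y)"
proof -
  have "sched_walk I D T ((zero_block # x) @ [zero_block])" "sched_walk I D T (zero_block # y @ [zero_block])"
    using assms by (simp_all add: closed_walk_def)
  then have "sched_walk I D T ((zero_block # x) @ (zero_block # y @ [zero_block]))"
    by (simp only: successively_append_iff) simp
  then show ?thesis by (simp add: closed_walk_def)
qed

lemma row_sum_le: "row_sum T A l \<le> real T"
proof -
  have "card {j. j < T \<and> A l j} \<le> card {..<T}" by (rule card_mono) auto
  then show ?thesis by (simp add: row_sum_def)
qed

lemma walk_rate_bounds:
  assumes "w \<noteq> []" and "1 \<le> T"
  shows "0 \<le> walk_rate T w l" and "walk_rate T w l \<le> 1"
proof -
  have "(\<Sum>A\<leftarrow>w. row_sum T A l) \<le> (\<Sum>A\<leftarrow>w. real T)"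
    by (rule sum_list_mono) (rule row_sum_le)
  then have "(\<Sum>A\<leftarrow>w. row_sum T A l) \<le> real (length w) * real T"
    by (simp add: sum_list_triv)
  moreover have "0 \<le> (\<Sum>A\<leftarrow>w. row_sum T A l)"
    by (rule sum_list_nonneg) (auto simp: row_sum_def)
  moreover have "0 < real (length w) * real T" using assms by simp
  ultimately show "0 \<le> walk_rate T w l" "walk_rate T w l \<le> 1"
    by (simp_all add: walk_rate_def)
qed

lemma sum_list_map_concat_replicate:
  "(\<Sum>x\<leftarrow>concat (replicate a u). f x) = of_nat a * (\<Sum>x\<leftarrow>u. f x)"
  by (induction a) (simp_all add: algebra_simps)

lemma walk_rate_zero_mix:
  assumes "w\<^sub>1 \<noteq> []" and "w\<^sub>2 \<noteq> []" and "1 \<le> T"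
  defines "L \<equiv> real (length w\<^sub>1 * length w\<^sub>2)"
  shows "walk_rate T (zero_block # concat (replicate (p * length w\<^sub>2) w\<^sub>1)
                      @ zero_block # concat (replicate (q * length w\<^sub>1) w\<^sub>2)) l
       = L * (real p * walk_rate T w\<^sub>1 l + real q * walk_rate T w\<^sub>2 l) / ((real p + real q) * L + 2)"
proof -
  define s\<^sub>1 where "s\<^sub>1 = (\<Sum>A\<leftarrow>w\<^sub>1. row_sum T A l)"
  define s\<^sub>2 where "s\<^sub>2 = (\<Sum>A\<leftarrow>w\<^sub>2. row_sum T A l)"
  define n\<^sub>1 where "n\<^sub>1 = real (length w\<^sub>1)"
  define n\<^sub>2 where "n\<^sub>2 = real (length w\<^sub>2)"
  have pos: "0 < n\<^sub>1" "0 < n\<^sub>2" "0 < real T" using assms by (simp_all add: n\<^sub>1_def n\<^sub>2_def)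
  have "walk_rate T (zero_block # concat (replicate (p * length w\<^sub>2) w\<^sub>1)
                      @ zero_block # concat (replicate (q * length w\<^sub>1) w\<^sub>2)) l
      = (real p * n\<^sub>2 * s\<^sub>1 + real q * n\<^sub>1 * s\<^sub>2) / ((real p * n\<^sub>2 * n\<^sub>1 + real q * n\<^sub>1 * n\<^sub>2 + 2) * real T)"
    by (simp add: walk_rate_def sum_list_map_concat_replicate length_concat sum_list_replicate
        row_sum_def zero_block_def s\<^sub>1_def s\<^sub>2_def n\<^sub>1_def n\<^sub>2_def algebra_simps)
  also have "\<dots> = L * (real p * (s\<^sub>1 / (n\<^sub>1 * real T)) + real q * (s\<^sub>2 / (n\<^sub>2 * real T)))
                 / ((real p + real q) * L + 2)"
  proof -
    have L: "L = n\<^sub>1 * n\<^sub>2" by (simp add: L_def n\<^sub>1_def n\<^sub>2_def)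
    have "L * (real p * (s\<^sub>1 / (n\<^sub>1 * real T)) + real q * (s\<^sub>2 / (n\<^sub>2 * real T)))
        = (real p * n\<^sub>2 * s\<^sub>1 + real q * n\<^sub>1 * s\<^sub>2) / real T"
      using pos by (simp add: L field_simps)
    moreover have "real p * n\<^sub>2 * n\<^sub>1 + real q * n\<^sub>1 * n\<^sub>2 + 2 = (real p + real q) * L + 2"
      by (simp add: L algebra_simps)
    ultimately show ?thesis by (simp add: divide_divide_eq_left mult.commute)
  qed
  finally show ?thesis by (simp add: walk_rate_def s\<^sub>1_def s\<^sub>2_def n\<^sub>1_def n\<^sub>2_def)
qed

section \<open>Rates approximated by closed walks\<close>

lemma floor_weighted_mix_ge:
  fixes r\<^sub>1 r\<^sub>2 u v L :: real and M :: nat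
  assumes r: "0 \<le> r\<^sub>1" "r\<^sub>1 \<le> 1" "0 \<le> r\<^sub>2" "r\<^sub>2 \<le> 1" and L: "1 \<le> L"
    and uv: "0 \<le> u" "0 \<le> v" "u + v = 1"
  defines "p \<equiv> real (nat \<lfloor>u * real M\<rfloor>)" and "q \<equiv> real (nat \<lfloor>v * real M\<rfloor>)"
  shows "u * r\<^sub>1 + v * r\<^sub>2 - 4 / (real M + 2) \<le> L * (p * r\<^sub>1 + q * r\<^sub>2) / ((p + q) * L + 2)"
proof -
  have p: "u * real M - 1 \<le> p" "p \<le> u * real M" "0 \<le> p"
    using uv unfolding p_def by (auto simp: of_nat_nat)
  have q: "v * real M - 1 \<le> q" "q \<le> v * real M" "0 \<le> q"
    using uv unfolding q_def by (auto simp: of_nat_nat)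
  define N where "N = p * r\<^sub>1 + q * r\<^sub>2"
  have N: "0 \<le> N" using p q r by (simp add: N_def)
  have "u * real M + v * real M = real M" using uv(3) by (metis distrib_right mult_1)
  then have "p + q \<le> real M" using p q by linarith
  then have "(p + q) * L \<le> real M * L" using L by (intro mult_right_mono) auto
  moreover have "0 \<le> (p + q) * L" using p q L by simp
  ultimately have den: "(p + q) * L + 2 \<le> (real M + 2) * L" "0 < (p + q) * L + 2"
    using L by (simp_all add: algebra_simps)
  have "N / (real M + 2) \<le> L * N / ((p + q) * L + 2)"
  proof -
    have "N * ((p + q) * L + 2) \<le> N * ((real M + 2) * L)"
      using den(1) N by (rule mult_left_mono)
    also have "\<dots> = L * N * (real M + 2)" by (simp add: algebra_simps)
    finally show ?thesis using den(2) by (simp add: divide_simps)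
  qed
  moreover have "u * r\<^sub>1 + v * r\<^sub>2 - 4 / (real M + 2) \<le> N / (real M + 2)"
  proof -
    define X where "X = u * r\<^sub>1 + v * r\<^sub>2"
    have "(u * real M - 1) * r\<^sub>1 + (v * real M - 1) * r\<^sub>2 \<le> N"
      unfolding N_def using p q r by (intro add_mono mult_right_mono) auto
    moreover have "(u * real M - 1) * r\<^sub>1 + (v * real M - 1) * r\<^sub>2 = real M * X - r\<^sub>1 - r\<^sub>2"
      by (simp add: algebra_simps X_def)
    moreover have "u * r\<^sub>1 \<le> u" "v * r\<^sub>2 \<le> v" using r uv by (simp_all add: mult_left_le)
    then have "X \<le> 1" using uv by (simp add: X_def)
    moreover have "(X - 4 / (real M + 2)) * (real M + 2) = real M * X + 2 * X - 4"
      by (simp add: field_simps)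
    ultimately have "(X - 4 / (real M + 2)) * (real M + 2) \<le> N"
      using r by linarith
    then show ?thesis unfolding X_def[symmetric] by (simp add: divide_simps algebra_simps)
  qed
  ultimately show ?thesis unfolding N_def by linarith
qed

definition walk_region :: "('l::finite \<Rightarrow> 'l set set) \<Rightarrow> ('l \<Rightarrow> 'l \<Rightarrow> int) \<Rightarrow> nat \<Rightarrow> (real^'l) set" where
  "walk_region I D T =
     {R. (\<forall>l. 0 \<le> R $ l) \<and> (\<forall>\<epsilon>>0. \<exists>w. closed_walk I D T w \<and> (\<forall>l. R $ l - \<epsilon> \<le> walk_rate T w l))}"

lemma walk_region_subset_achievable:
  fixes I :: "'l::finite \<Rightarrow> 'l set set"
  assumes "binary_profile I" and "character I D \<le> T" and "1 \<le> T"
  shows "walk_region I D T \<subseteq> achievable_region I D"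
proof
  fix R assume R: "R \<in> walk_region I D T"
  show "R \<in> achievable_region I D"
    unfolding achievable_region_def
  proof (intro CollectI conjI allI impI)
    show "0 \<le> R $ l" for l using R by (simp add: walk_region_def)
    fix \<epsilon> :: real assume "0 < \<epsilon>"
    then obtain w where w: "closed_walk I D T w" "\<forall>l. R $ l - \<epsilon> \<le> walk_rate T w l"
      using R unfolding walk_region_def by blast
    show "\<exists>S RS. is_rate_vector I D S RS \<and> (\<forall>l. R $ l - \<epsilon> \<le> RS $ l)"
      using closed_walk_rate_vector[OF assms w(1)] w(2)
      by (intro exI[of _ "block_schedule T (cyclic_blocks w)"] exI[of _ "\<chi> l. walk_rate T w l"]) auto
  qed
qed

lemma cycle_closed_walk:
  assumes "is_cycle I D T As"
  shows "closed_walk I D T (butlast As)" and "walk_rate T (butlast As) l = cycle_rate T As $ l"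
proof -
  have len: "2 \<le> length As" and "last As = hd As"
    and edges: "\<And>i. i + 1 < length As \<Longrightarrow> (As ! i, As ! (i + 1)) \<in> sched_edges I D T"
    using assms unfolding is_cycle_def by auto
  have ne: "As \<noteq> []" "butlast As \<noteq> []" using len by (auto simp: butlast_conv_take)
  then have "hd (butlast As) = hd As" using len by (simp add: hd_conv_nth nth_butlast)
  with ne \<open>last As = hd As\<close> have "butlast As @ [hd (butlast As)] = As"
    by (metis append_butlast_last_id)
  moreover have "sched_walk I D T As"
    unfolding successively_conv_nth using edges by auto
  ultimately show "closed_walk I D T (butlast As)" using ne(2) by (simp add: closed_walk_def)
  have "(\<Sum>A\<leftarrow>butlast As. row_sum T A l) = (\<Sum>i<length As - 1. row_sum T (As ! i) l)"
    by (simp add: sum_list_sum_nth atLeast0LessThan nth_butlast)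
  then show "walk_rate T (butlast As) l = cycle_rate T As $ l"
    by (simp add: walk_rate_def cycle_rate_def row_sum_def Let_def)
qed

lemma convex_walk_region:
  fixes I :: "'l::finite \<Rightarrow> 'l set set"
  assumes T1: "1 \<le> T"
  shows "convex (walk_region I D T)"
  unfolding convex_def
proof (intro ballI allI impI)
  fix x y :: "real^'l" and u v :: real
  assume x: "x \<in> walk_region I D T" and y: "y \<in> walk_region I D T"
    and u: "0 \<le> u" and v: "0 \<le> v" and uv: "u + v = 1"
  show "u *\<^sub>R x + v *\<^sub>R y \<in> walk_region I D T"
    unfolding walk_region_def
  proof (intro CollectI conjI allI impI)
    show "0 \<le> (u *\<^sub>R x + v *\<^sub>R y) $ l" for l
      using x y u v by (simp add: walk_region_def)
    fix \<epsilon> :: real assume \<epsilon>: "0 < \<epsilon>"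
    obtain w\<^sub>1 where w\<^sub>1: "closed_walk I D T w\<^sub>1" "\<forall>l. x $ l - \<epsilon> / 2 \<le> walk_rate T w\<^sub>1 l"
      using x \<epsilon> unfolding walk_region_def mem_Collect_eq by (metis half_gt_zero)
    obtain w\<^sub>2 where w\<^sub>2: "closed_walk I D T w\<^sub>2" "\<forall>l. y $ l - \<epsilon> / 2 \<le> walk_rate T w\<^sub>2 l"
      using y \<epsilon> unfolding walk_region_def mem_Collect_eq by (metis half_gt_zero)
    have ne: "w\<^sub>1 \<noteq> []" "w\<^sub>2 \<noteq> []" using w\<^sub>1(1) w\<^sub>2(1) by (simp_all add: closed_walk_def)
    then have "1 * 1 \<le> length w\<^sub>1 * length w\<^sub>2" by (intro mult_le_mono) (auto simp: Suc_le_eq)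
    then have L: "1 \<le> real (length w\<^sub>1 * length w\<^sub>2)" by (metis mult_1 of_nat_1 of_nat_le_iff)
    define M where "M = nat \<lceil>8 / \<epsilon>\<rceil>"
    have "8 / \<epsilon> \<le> real M" unfolding M_def by linarith
    then have "8 \<le> \<epsilon> * (real M + 2)" using \<epsilon> by (simp add: divide_le_eq algebra_simps)
    then have M: "4 / (real M + 2) \<le> \<epsilon> / 2" using \<epsilon> by (simp add: divide_simps)
    \<comment> \<open>The repetition counts make the two parts of \<open>w\<close> have lengths in ratio \<open>\<lfloor>u M\<rfloor> : \<lfloor>v M\<rfloor>\<close>.\<close>
    define w where "w = zero_block # concat (replicate (nat \<lfloor>u * real M\<rfloor> * length w\<^sub>2) w\<^sub>1)
                          @ zero_block # concat (replicate (nat \<lfloor>v * real M\<rfloor> * length w\<^sub>1) w\<^sub>2)"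
    have "closed_walk I D T w"
      unfolding w_def by (intro closed_walk_zero_append closed_walk_zero_concat_replicate w\<^sub>1(1) w\<^sub>2(1))
    moreover have "(u *\<^sub>R x + v *\<^sub>R y) $ l - \<epsilon> \<le> walk_rate T w l" for l
    proof -
      have "u * walk_rate T w\<^sub>1 l + v * walk_rate T w\<^sub>2 l - 4 / (real M + 2) \<le> walk_rate T w l"
        unfolding w_def walk_rate_zero_mix[OF ne T1]
        by (rule floor_weighted_mix_ge)
          (use walk_rate_bounds[OF ne(1) T1] walk_rate_bounds[OF ne(2) T1] L u v uv in auto)
      moreover have "u * (x $ l - \<epsilon> / 2) \<le> u * walk_rate T w\<^sub>1 l" "v * (y $ l - \<epsilon> / 2) \<le> v * walk_rate T w\<^sub>2 l"
        using w\<^sub>1(2) w\<^sub>2(2) u v by (simp_all add: mult_left_mono)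
      moreover have "u * (x $ l - \<epsilon> / 2) + v * (y $ l - \<epsilon> / 2) = (u *\<^sub>R x + v *\<^sub>R y) $ l - \<epsilon> / 2"
        using uv by (simp add: algebra_simps flip: distrib_left)
      ultimately show ?thesis using M by linarith
    qed
    ultimately show "\<exists>w. closed_walk I D T w \<and> (\<forall>l. (u *\<^sub>R x + v *\<^sub>R y) $ l - \<epsilon> \<le> walk_rate T w l)"
      by blast
  qed
qed

lemma cycle_rate_in_walk_region:
  assumes "is_cycle I D T As" and "1 \<le> T"
  shows "cycle_rate T As \<in> walk_region I D T"
proof -
  have w: "closed_walk I D T (butlast As)" by (rule cycle_closed_walk(1)[OF assms(1)])
  then have "butlast As \<noteq> []" by (simp add: closed_walk_def)
  then have "0 \<le> cycle_rate T As $ l" for l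
    using walk_rate_bounds(1)[OF _ assms(2)] cycle_closed_walk(2)[OF assms(1)] by metis
  moreover have "cycle_rate T As $ l - \<epsilon> \<le> walk_rate T (butlast As) l" if "0 < \<epsilon>" for l \<epsilon>
    using that cycle_closed_walk(2)[OF assms(1)] by simp
  ultimately show ?thesis using w unfolding walk_region_def by blast
qed

theorem theorem7:
  fixes I :: "'l::finite \<Rightarrow> 'l set set" and D :: "'l \<Rightarrow> 'l \<Rightarrow> int" and T :: nat
  assumes "wf_network I"
    and "binary_profile I"
    and "T \<ge> max (character I D) 1"
  shows "graph_region I D T \<subseteq> achievable_region I D"
proof -
  have TD: "character I D \<le> T" and T: "1 \<le> T" using assms(3) by auto
  have "graph_region I D T \<subseteq> walk_region I D T"
    unfolding graph_region_def
    by (rule hull_minimal) (auto intro: cycle_rate_in_walk_region[OF _ T] convex_walk_region[OF T])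
  also have "\<dots> \<subseteq> achievable_region I D"
    by (rule walk_region_subset_achievable[OF assms(2) TD T])
  finally show ?thesis .
qed

end
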